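(* Let $\varepsilon=1+\sqrt2$, $K=\mathbb Q(\sqrt2)$, $\sigma$ its nontrivial Galois automorphism, and let $$\Gamma(2,5)=\left\{\begin{pmatrix}x_0+x_1\sqrt2&\sqrt5(x_2+x_3\sqrt2)\\ \sqrt5(x_2-x_3\sqrt2)&x_0-x_1\sqrt2\end{pmatrix}\in\mathrm{SL}_2(\mathbb R):\ x_i\in\mathbb Z\right\},\qquad H=\left\langle\begin{pmatrix}\varepsilon^2&0\\0&\varepsilon^{-2}\end{pmatrix}\right\rangle.$$ For $\gamma\in\Gamma(2,5)$ put $z_1(\gamma)=x_0+x_1\sqrt2$, $z_2(\gamma)=x_2+x_3\sqrt2\in\mathcal O_K$. Let $n\in\mathbb N$. Consider the set of double cosets $[\gamma]=H\gamma H$ whose elements $\gamma=\begin{pmatrix}a&b\\c&d\end{pmatrix}$ have all four entries nonzero and of the same sign (i.e. $\delta_1(\gamma)=\delta_2(\gamma)=0$) and satisfy $bc=5n$, modulo the identification $[\gamma]\sim[-\gamma]$. Then the map $$\psi:[\gamma]\longmapsto(|z_1(\gamma)|,\ |z_2(\gamma)|)\in D_K(5n+1)\times D_K(n)$$ is well defined, two-to-one, and surjective.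
   Context: For $z\in\mathcal O_K$, $|z|$ denotes the real absolute value of $z\in\mathbb R$ (so $|z|=\pm z$). For $m\in\mathbb N$, $D_K(m)$ is the set of totally positive $z\in\mathcal O_K$ (i.e. $z>0$ and $\sigma(z)>0$) with $z\,\sigma(z)=m$, modulo the equivalence $z\sim z'$ iff $z=\varepsilon^{2k}z'$ for some $k\in\mathbb Z$. *)

theory Defs
  imports "HOL-Analysis.Analysis"
begin

definition eps :: real where "eps = 1 + sqrt 2"

definition OK :: "real set" where
  "OK = {of_int a + of_int b * sqrt 2 | a b :: int. True}"

definition sigmaK :: "real \<Rightarrow> real" where
  "sigmaK z = (THE w. \<exists>a b :: int. z = of_int a + of_int b * sqrt 2 \<and> w = of_int a - of_int b * sqrt 2)"

definition TP :: "nat \<Rightarrow> real set" where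
  "TP m = {z \<in> OK. z > 0 \<and> sigmaK z > 0 \<and> z * sigmaK z = real m}"

definition epsrel :: "real set \<Rightarrow> (real \<times> real) set" where
  "epsrel A = {(z, z'). z \<in> A \<and> z' \<in> A \<and> (\<exists>k :: int. z = eps powi (2 * k) * z')}"

definition DK :: "nat \<Rightarrow> real set set" where
  "DK m = TP m // epsrel (TP m)"

definition gmat :: "int \<Rightarrow> int \<Rightarrow> int \<Rightarrow> int \<Rightarrow> real^2^2" where
  "gmat x0 x1 x2 x3 =
     vector [vector [of_int x0 + of_int x1 * sqrt 2, sqrt 5 * (of_int x2 + of_int x3 * sqrt 2)],
             vector [sqrt 5 * (of_int x2 - of_int x3 * sqrt 2), of_int x0 - of_int x1 * sqrt 2]]"

definition Gamma25 :: "(real^2^2) set" where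
  "Gamma25 = {g. \<exists>x0 x1 x2 x3. g = gmat x0 x1 x2 x3 \<and> det g = 1}"

definition hmat :: "int \<Rightarrow> real^2^2" where
  "hmat k = vector [vector [eps powi (2 * k), 0], vector [0, eps powi (- 2 * k)]]"

definition Hgrp :: "(real^2^2) set" where
  "Hgrp = range hmat"

definition dcoset :: "real^2^2 \<Rightarrow> (real^2^2) set" where
  "dcoset g = {h1 ** g ** h2 | h1 h2. h1 \<in> Hgrp \<and> h2 \<in> Hgrp}"

definition admissible :: "nat \<Rightarrow> real^2^2 \<Rightarrow> bool" where
  "admissible n g \<longleftrightarrow>
     ((\<forall>i j. g $ i $ j > 0) \<or> (\<forall>i j. g $ i $ j < 0)) \<and> g $ 1 $ 2 * g $ 2 $ 1 = 5 * real n"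

definition DCS :: "nat \<Rightarrow> (real^2^2) set set" where
  "DCS n = {C. \<exists>g \<in> Gamma25. C = dcoset g \<and> (\<forall>g' \<in> C. admissible n g')}"

definition pmrel :: "nat \<Rightarrow> ((real^2^2) set \<times> (real^2^2) set) set" where
  "pmrel n = {(C, C'). C \<in> DCS n \<and> C' \<in> DCS n \<and> (C' = C \<or> C' = uminus ` C)}"

definition DomS :: "nat \<Rightarrow> (real^2^2) set set set" where
  "DomS n = DCS n // pmrel n"

definition z1 :: "real^2^2 \<Rightarrow> real" where "z1 g = g $ 1 $ 1"
definition z2 :: "real^2^2 \<Rightarrow> real" where "z2 g = g $ 1 $ 2 / sqrt 5"

definition pv :: "nat \<Rightarrow> real^2^2 \<Rightarrow> real set \<times> real set" where
  "pv n g = (epsrel (TP (5 * n + 1)) `` {\<bar>z1 g\<bar>}, epsrel (TP n) `` {\<bar>z2 g\<bar>})"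

definition psi :: "nat \<Rightarrow> (real^2^2) set set \<Rightarrow> real set \<times> real set" where
  "psi n X = (THE p. \<exists>g \<in> Gamma25. dcoset g \<in> X \<and> p = pv n g)"

end

theory Submission
  imports Defs
begin

text \<open>
  An element of Gamma(2,5) is determined by u = z1 and v = z2: it is the matrix
  [[u, sqrt 5 v], [sqrt 5 sigma(v), sigma(u)]], and its determinant is u sigma(u) - 5 v sigma(v).
  If all entries are positive and bc = 5n, then u and v are totally positive of norms 5n + 1
  and n, and up to the sign identification every admissible double coset has such a
  representative. Multiplying by diag(eps^(2k), eps^(-2k)) on the left and by
  diag(eps^(2l), eps^(-2l)) on the right replaces (u, v) by (eps^(2(k+l)) u, eps^(2(k-l)) v).
  So the double coset determines the eps^2-classes of u and v, while (eps^(2i) u, eps^(2j) v)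
  and (u, v) give the same double coset exactly when i + j is even. As the lattice
  {(k + l, k - l)} has index 2 in Z^2, each fibre of psi consists of the two classes of
  (u, v) and (u, eps^2 v).
\<close>

section \<open>Conjugation in the ring of integers of Q(sqrt 2)\<close>

lemma int_sq_eq_two_sq_imp_zero:
  fixes p q :: int
  assumes "p\<^sup>2 = 2 * q\<^sup>2"
  shows "q = 0"
  using assms
proof (induction "nat \<bar>q\<bar>" arbitrary: p q rule: less_induct)
  case less
  show ?case
  proof (rule ccontr)
    assume "q \<noteq> 0"
    have "even (p\<^sup>2)" using less.prems by simp
    then have "even p" by simp
    then obtain r where r: "p = 2 * r" by blast
    then have "q\<^sup>2 = 2 * r\<^sup>2" using less.prems by (simp add: power_mult_distrib)
    then have "even (q\<^sup>2)" by simp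
    then have "even q" by simp
    then obtain t where t: "q = 2 * t" by blast
    then have "r\<^sup>2 = 2 * t\<^sup>2" using \<open>q\<^sup>2 = 2 * r\<^sup>2\<close> by (simp add: power_mult_distrib)
    moreover have "nat \<bar>t\<bar> < nat \<bar>q\<bar>" using t \<open>q \<noteq> 0\<close> by auto
    ultimately have "t = 0" using less.hyps by blast
    with t \<open>q \<noteq> 0\<close> show False by simp
  qed
qed

lemma of_int_add_sqrt2_eq_iff:
  fixes a b c d :: int
  shows "of_int a + of_int b * sqrt 2 = of_int c + of_int d * sqrt 2 \<longleftrightarrow> a = c \<and> b = d"
proof
  assume eq: "of_int a + of_int b * sqrt 2 = of_int c + of_int d * sqrt 2"
  then have "real_of_int (a - c) = of_int (d - b) * sqrt 2" by (simp add: algebra_simps)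
  then have "real_of_int ((a - c)\<^sup>2) = of_int (2 * (d - b)\<^sup>2)"
    by (simp add: power_mult_distrib)
  then have "d - b = 0" by (intro int_sq_eq_two_sq_imp_zero) (simp only: of_int_eq_iff)
  with eq show "a = c \<and> b = d" by simp
qed simp

definition conj_pair :: "real \<Rightarrow> real \<Rightarrow> bool" where
  "conj_pair z w \<longleftrightarrow> (\<exists>a b :: int. z = of_int a + of_int b * sqrt 2 \<and> w = of_int a - of_int b * sqrt 2)"

lemma sigmaK_eqI: "conj_pair z w \<Longrightarrow> sigmaK z = w"
  unfolding sigmaK_def conj_pair_def
  by (rule the_equality) (auto simp: of_int_add_sqrt2_eq_iff)

lemma OK_iff_conj_pair: "z \<in> OK \<longleftrightarrow> (\<exists>w. conj_pair z w)"
  unfolding OK_def conj_pair_def by blast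

lemma conj_pair_sigmaK: "z \<in> OK \<Longrightarrow> conj_pair z (sigmaK z)"
  using OK_iff_conj_pair sigmaK_eqI by blast

lemma conj_pair_mult: "conj_pair z w \<Longrightarrow> conj_pair z' w' \<Longrightarrow> conj_pair (z * z') (w * w')"
  unfolding conj_pair_def
proof (elim exE conjE)
  fix a b a' b' :: int
  assume ab: "z = of_int a + of_int b * sqrt 2" "w = of_int a - of_int b * sqrt 2"
    and ab': "z' = of_int a' + of_int b' * sqrt 2" "w' = of_int a' - of_int b' * sqrt 2"
  have "sqrt 2 * sqrt 2 = (2 :: real)" by simp
  then show "\<exists>c d :: int. z * z' = of_int c + of_int d * sqrt 2 \<and> w * w' = of_int c - of_int d * sqrt 2"
    by (intro exI[of _ "a * a' + 2 * b * b'"] exI[of _ "a * b' + b * a'"]) (simp add: ab ab' algebra_simps)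
qed

lemma conj_pair_uminus: "conj_pair z w \<Longrightarrow> conj_pair (- z) (- w)"
  unfolding conj_pair_def
proof (elim exE conjE)
  fix a b :: int
  assume "z = of_int a + of_int b * sqrt 2" "w = of_int a - of_int b * sqrt 2"
  then show "\<exists>c d :: int. - z = of_int c + of_int d * sqrt 2 \<and> - w = of_int c - of_int d * sqrt 2"
    by (intro exI[of _ "- a"] exI[of _ "- b"]) simp
qed

lemma OK_mult: "z \<in> OK \<Longrightarrow> z' \<in> OK \<Longrightarrow> z * z' \<in> OK"
  using OK_iff_conj_pair conj_pair_mult by blast

lemma OK_uminus: "z \<in> OK \<Longrightarrow> - z \<in> OK"
  using OK_iff_conj_pair conj_pair_uminus by blast

lemma sigmaK_uminus: "z \<in> OK \<Longrightarrow> sigmaK (- z) = - sigmaK z"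
  by (intro sigmaK_eqI conj_pair_uminus conj_pair_sigmaK)

section \<open>Powers of the unit eps^2\<close>

definition eps2 :: "int \<Rightarrow> real" where
  "eps2 k = eps powi (2 * k)"

lemma eps_gt_1: "eps > 1"
  unfolding eps_def by simp

lemma eps2_pos: "eps2 k > 0"
  unfolding eps2_def using eps_gt_1 by simp

lemma eps2_0 [simp]: "eps2 0 = 1"
  unfolding eps2_def by simp

lemma eps2_add: "eps2 (k + l) = eps2 k * eps2 l"
  unfolding eps2_def using eps_gt_1 by (simp add: distrib_left power_int_add)

lemma eps2_nonzero [simp]: "eps2 k \<noteq> 0"
  using eps2_pos[of k] by simp

lemma eps2_mult_uminus [simp]: "eps2 k * eps2 (- k) = 1"
  using eps2_add[of k "- k"] by simp

lemma eps2_diff: "eps2 (k - l) = eps2 k * eps2 (- l)"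
  using eps2_add[of k "- l"] by simp

lemma eps2_uminus: "eps2 (- k) = inverse (eps2 k)"
  unfolding eps2_def by (simp add: power_int_minus)

lemma strict_mono_eps2: "strict_mono eps2"
  unfolding eps2_def using eps_gt_1 by (intro strict_monoI power_int_strict_increasing) auto

lemma eps2_eq_iff: "eps2 k = eps2 l \<longleftrightarrow> k = l"
  using strict_mono_eq[OF strict_mono_eps2] .

lemma conj_pair_eps2: "conj_pair (eps2 k) (eps2 (- k))"
proof -
  have eps2_1: "eps2 1 = 3 + 2 * sqrt 2"
    unfolding eps2_def eps_def by (simp add: power2_eq_square algebra_simps)
  have "(3 + 2 * sqrt 2) * (3 - 2 * sqrt 2) = (1 :: real)"
    by (simp add: algebra_simps)
  then have eps2_m1: "eps2 (- 1) = 3 - 2 * sqrt 2"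
    unfolding eps2_uminus eps2_1 by (rule inverse_unique)
  have up: "conj_pair (eps2 1) (eps2 (- 1))" and down: "conj_pair (eps2 (- 1)) (eps2 1)"
    unfolding conj_pair_def eps2_1 eps2_m1
    by (intro exI[of _ 3] exI[of _ 2] exI[of _ "- 2"]; simp)+
  show ?thesis
  proof (induction k rule: int_induct[where k = 0])
    case base
    show ?case unfolding conj_pair_def by (intro exI[of _ 1] exI[of _ 0]) simp
  next
    case (step1 i)
    from conj_pair_mult[OF step1(2) up] show ?case by (simp flip: eps2_add)
  next
    case (step2 i)
    from conj_pair_mult[OF step2(2) down] show ?case by (simp flip: eps2_add)
  qed
qed

lemma OK_eps2_mult: "x \<in> OK \<Longrightarrow> eps2 k * x \<in> OK"
  using OK_iff_conj_pair conj_pair_eps2 OK_mult by blast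

lemma sigmaK_eps2_mult: "x \<in> OK \<Longrightarrow> sigmaK (eps2 k * x) = eps2 (- k) * sigmaK x"
  by (intro sigmaK_eqI conj_pair_mult conj_pair_eps2 conj_pair_sigmaK)

lemma TP_eps2_mult:
  assumes "x \<in> TP m"
  shows "eps2 k * x \<in> TP m"
proof -
  have x: "x \<in> OK" "x > 0" "sigmaK x > 0" "x * sigmaK x = real m"
    using assms unfolding TP_def by auto
  have sigma: "sigmaK (eps2 k * x) = eps2 (- k) * sigmaK x"
    using x(1) by (rule sigmaK_eps2_mult)
  have "eps2 k * x * sigmaK (eps2 k * x) = (eps2 k * eps2 (- k)) * (x * sigmaK x)"
    unfolding sigma by (simp only: mult_ac)
  then show ?thesis
    using x eps2_pos[of k] eps2_pos[of "- k"] unfolding TP_def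
    by (simp add: OK_eps2_mult sigma)
qed

lemma TP_eps2_mult_iff: "eps2 k * x \<in> TP m \<longleftrightarrow> x \<in> TP m"
  using TP_eps2_mult[of "eps2 k * x" m "- k"] TP_eps2_mult[of x m k]
  by (auto simp: mult.assoc[symmetric] mult.commute[of "eps2 (- k)"])

lemma mem_epsrel_iff: "(z, z') \<in> epsrel A \<longleftrightarrow> z \<in> A \<and> z' \<in> A \<and> (\<exists>k. z = eps2 k * z')"
  unfolding epsrel_def eps2_def by simp

lemma equiv_epsrel: "equiv A (epsrel A)"
proof (rule equivI)
  show "epsrel A \<subseteq> A \<times> A"
    by (auto simp: mem_epsrel_iff)
  show "refl_on A (epsrel A)"
    by (auto simp: refl_on_def mem_epsrel_iff intro: exI[of _ 0])
  show "sym (epsrel A)"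
  proof (rule symI)
    fix z z' assume "(z, z') \<in> epsrel A"
    then obtain k where "z \<in> A" "z' \<in> A" "z = eps2 k * z'" by (auto simp: mem_epsrel_iff)
    then have "z' = eps2 (- k) * z" by (simp flip: mult.assoc add: mult.commute[of "eps2 (- k)"])
    with \<open>z \<in> A\<close> \<open>z' \<in> A\<close> show "(z', z) \<in> epsrel A" by (auto simp: mem_epsrel_iff)
  qed
  show "trans (epsrel A)"
  proof (rule transI)
    fix x y z assume "(x, y) \<in> epsrel A" "(y, z) \<in> epsrel A"
    then obtain k l where "x \<in> A" "z \<in> A" "x = eps2 k * y" "y = eps2 l * z"
      by (auto simp: mem_epsrel_iff)
    then have "x = eps2 (k + l) * z" by (simp add: eps2_add)
    with \<open>x \<in> A\<close> \<open>z \<in> A\<close> show "(x, z) \<in> epsrel A" by (auto simp: mem_epsrel_iff)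
  qed
qed

lemma epsrel_Image_eq_iff:
  "x \<in> A \<Longrightarrow> y \<in> A \<Longrightarrow> epsrel A `` {x} = epsrel A `` {y} \<longleftrightarrow> (\<exists>k. x = eps2 k * y)"
  by (simp add: eq_equiv_class_iff[OF equiv_epsrel] mem_epsrel_iff)

lemma epsrel_TP_Image_eps2_mult: "epsrel (TP m) `` {eps2 k * x} = epsrel (TP m) `` {x}"
proof (cases "x \<in> TP m")
  case True
  then show ?thesis by (auto simp: epsrel_Image_eq_iff TP_eps2_mult)
next
  case False
  then show ?thesis by (auto simp: mem_epsrel_iff TP_eps2_mult_iff)
qed

section \<open>The matrices of Gamma(2,5)\<close>

definition mat2 :: "real \<Rightarrow> real \<Rightarrow> real \<Rightarrow> real \<Rightarrow> real^2^2" where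
  "mat2 a b c d = vector [vector [a, b], vector [c, d]]"

lemma mat2_nth [simp]:
  "mat2 a b c d $ 1 $ 1 = a" "mat2 a b c d $ 1 $ 2 = b"
  "mat2 a b c d $ 2 $ 1 = c" "mat2 a b c d $ 2 $ 2 = d"
  by (simp_all add: mat2_def)

lemma mat2_eta: "g = mat2 (g $ 1 $ 1) (g $ 1 $ 2) (g $ 2 $ 1) (g $ 2 $ 2)"
  by (simp add: vec_eq_iff forall_2)

lemma mat2_eq_iff: "mat2 a b c d = mat2 a' b' c' d' \<longleftrightarrow> a = a' \<and> b = b' \<and> c = c' \<and> d = d'"
  by (metis mat2_nth)

lemma mat2_mult:
  "mat2 a b c d ** mat2 a' b' c' d' =
     mat2 (a * a' + b * c') (a * b' + b * d') (c * a' + d * c') (c * b' + d * d')"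
  by (simp add: vec_eq_iff forall_2 matrix_matrix_mult_def sum_2)

lemma uminus_mat2: "- mat2 a b c d = mat2 (- a) (- b) (- c) (- d)"
  by (simp add: vec_eq_iff forall_2)

lemma det_mat2: "det (mat2 a b c d) = a * d - b * c"
  by (simp add: det_2)

lemma hmat_eq_mat2: "hmat k = mat2 (eps2 k) 0 0 (eps2 (- k))"
  unfolding hmat_def mat2_def eps2_def by simp

lemma hmat_mult_mat2_mult:
  "hmat k ** mat2 a b c d ** hmat l =
     mat2 (eps2 k * a * eps2 l) (eps2 k * b * eps2 (- l)) (eps2 (- k) * c * eps2 l) (eps2 (- k) * d * eps2 (- l))"
  by (simp add: hmat_eq_mat2 mat2_mult)

lemma hmat_mult_hmat: "hmat k ** hmat l = hmat (k + l)"
  by (simp add: hmat_eq_mat2 mat2_mult flip: eps2_add)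

lemma hmat_0: "hmat 0 = mat 1"
  by (simp add: hmat_eq_mat2 mat2_def vec_eq_iff forall_2 mat_def)

lemma hmat_mult_uminus_mult: "hmat k ** (- g) ** hmat l = - (hmat k ** g ** hmat l)"
  by (subst (1 2) mat2_eta[of g]) (simp add: hmat_mult_mat2_mult uminus_mat2)

definition gmatK :: "real \<Rightarrow> real \<Rightarrow> real^2^2" where
  "gmatK u v = mat2 u (sqrt 5 * v) (sqrt 5 * sigmaK v) (sigmaK u)"

lemma gmat_eq_gmatK:
  "gmat x0 x1 x2 x3 = gmatK (of_int x0 + of_int x1 * sqrt 2) (of_int x2 + of_int x3 * sqrt 2)"
proof -
  have "sigmaK (of_int a + of_int b * sqrt 2) = of_int a - of_int b * sqrt 2" for a b
    by (rule sigmaK_eqI) (auto simp: conj_pair_def)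
  then show ?thesis
    unfolding gmat_def gmatK_def mat2_def by simp
qed

lemma gmatK_eq_iff: "gmatK u v = gmatK u' v' \<longleftrightarrow> u = u' \<and> v = v'"
  unfolding gmatK_def mat2_eq_iff by auto

lemma det_gmatK: "det (gmatK u v) = u * sigmaK u - 5 * (v * sigmaK v)"
  unfolding gmatK_def det_mat2 by (simp add: algebra_simps)

lemma z1_gmatK [simp]: "z1 (gmatK u v) = u"
  and z2_gmatK [simp]: "z2 (gmatK u v) = v"
  unfolding z1_def z2_def gmatK_def by simp_all

lemma uminus_gmatK: "u \<in> OK \<Longrightarrow> v \<in> OK \<Longrightarrow> - gmatK u v = gmatK (- u) (- v)"
  unfolding gmatK_def uminus_mat2 by (simp add: sigmaK_uminus)

text \<open>
  H x H acts on (z1, z2) through the sublattice {(k + l, k - l)} of index 2 in Z^2;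
  this is the source of the two-to-one.
\<close>

lemma hmat_mult_gmatK_mult:
  assumes "u \<in> OK" "v \<in> OK"
  shows "hmat k ** gmatK u v ** hmat l = gmatK (eps2 (k + l) * u) (eps2 (k - l) * v)"
  unfolding gmatK_def hmat_mult_mat2_mult mat2_eq_iff
    sigmaK_eps2_mult[OF assms(1)] sigmaK_eps2_mult[OF assms(2)]
  by (simp add: eps2_add eps2_diff mult_ac)

lemma Gamma25_iff:
  "g \<in> Gamma25 \<longleftrightarrow> (\<exists>u \<in> OK. \<exists>v \<in> OK. g = gmatK u v \<and> u * sigmaK u - 5 * (v * sigmaK v) = 1)"
proof
  assume "g \<in> Gamma25"
  then obtain x0 x1 x2 x3 where "g = gmat x0 x1 x2 x3" "det g = 1"
    unfolding Gamma25_def by blast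
  then show "\<exists>u \<in> OK. \<exists>v \<in> OK. g = gmatK u v \<and> u * sigmaK u - 5 * (v * sigmaK v) = 1"
    unfolding gmat_eq_gmatK OK_def by (auto simp: det_gmatK)
next
  assume "\<exists>u \<in> OK. \<exists>v \<in> OK. g = gmatK u v \<and> u * sigmaK u - 5 * (v * sigmaK v) = 1"
  then show "g \<in> Gamma25"
    unfolding Gamma25_def gmat_eq_gmatK OK_def by (auto simp: det_gmatK)
qed

lemma uminus_Gamma25:
  assumes "g \<in> Gamma25"
  shows "- g \<in> Gamma25"
proof -
  obtain u v where uv: "u \<in> OK" "v \<in> OK" "g = gmatK u v"
    and "u * sigmaK u - 5 * (v * sigmaK v) = 1"
    using assms unfolding Gamma25_iff by blast
  then have "- g = gmatK (- u) (- v) \<and> - u * sigmaK (- u) - 5 * (- v * sigmaK (- v)) = 1"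
    by (simp add: uminus_gmatK sigmaK_uminus)
  then show ?thesis
    unfolding Gamma25_iff using uv OK_uminus by blast
qed

definition positive_matrix :: "real^2^2 \<Rightarrow> bool" where
  "positive_matrix g \<longleftrightarrow> (\<forall>i j. g $ i $ j > 0)"

lemma positive_matrix_mat2: "positive_matrix (mat2 a b c d) \<longleftrightarrow> a > 0 \<and> b > 0 \<and> c > 0 \<and> d > 0"
  unfolding positive_matrix_def by (simp add: forall_2)

lemma admissible_iff:
  "admissible n g \<longleftrightarrow> (positive_matrix g \<or> positive_matrix (- g)) \<and> g $ 1 $ 2 * g $ 2 $ 1 = 5 * real n"
  unfolding admissible_def positive_matrix_def by auto

lemma positive_Gamma25_iff:
  "g \<in> Gamma25 \<and> positive_matrix g \<and> g $ 1 $ 2 * g $ 2 $ 1 = 5 * real n \<longleftrightarrow>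
     (\<exists>u \<in> TP (5 * n + 1). \<exists>v \<in> TP n. g = gmatK u v)"
proof
  assume g: "g \<in> Gamma25 \<and> positive_matrix g \<and> g $ 1 $ 2 * g $ 2 $ 1 = 5 * real n"
  then obtain u v where uv: "u \<in> OK" "v \<in> OK" "g = gmatK u v"
    and norm: "u * sigmaK u - 5 * (v * sigmaK v) = 1"
    unfolding Gamma25_iff by blast
  have "sqrt 5 * v * (sqrt 5 * sigmaK v) = 5 * real n"
    using g unfolding uv(3) gmatK_def by simp
  then have "v * sigmaK v = real n"
    by (simp add: algebra_simps)
  moreover have "u > 0" "v > 0" "sigmaK v > 0" "sigmaK u > 0"
    using g unfolding uv(3) gmatK_def positive_matrix_mat2 by (auto simp: zero_less_mult_iff)
  ultimately show "\<exists>u \<in> TP (5 * n + 1). \<exists>v \<in> TP n. g = gmatK u v"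
    using uv norm unfolding TP_def by auto
next
  assume "\<exists>u \<in> TP (5 * n + 1). \<exists>v \<in> TP n. g = gmatK u v"
  then obtain u v where u: "u \<in> TP (5 * n + 1)" and v: "v \<in> TP n" and g: "g = gmatK u v"
    by blast
  have u': "u \<in> OK" "u > 0" "sigmaK u > 0" "u * sigmaK u = 5 * real n + 1"
    and v': "v \<in> OK" "v > 0" "sigmaK v > 0" "v * sigmaK v = real n"
    using u v unfolding TP_def by auto
  have "g \<in> Gamma25"
    unfolding Gamma25_iff g using u' v' by (intro bexI[of _ u] bexI[of _ v]) auto
  moreover have "g $ 1 $ 2 * g $ 2 $ 1 = 5 * real n"
    unfolding g gmatK_def using v'(4) by (simp add: algebra_simps)
  ultimately show "g \<in> Gamma25 \<and> positive_matrix g \<and> g $ 1 $ 2 * g $ 2 $ 1 = 5 * real n"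
    using u' v' unfolding g gmatK_def positive_matrix_mat2 by simp
qed

section \<open>Double cosets modulo H\<close>

lemma mem_dcoset_iff: "g' \<in> dcoset g \<longleftrightarrow> (\<exists>k l. g' = hmat k ** g ** hmat l)"
  unfolding dcoset_def Hgrp_def by blast

lemma dcoset_self: "g \<in> dcoset g"
  unfolding mem_dcoset_iff by (intro exI[of _ 0]) (simp add: hmat_0)

lemma dcoset_subset:
  assumes "g' \<in> dcoset g"
  shows "dcoset g' \<subseteq> dcoset g"
proof
  fix x assume "x \<in> dcoset g'"
  then obtain a b where "x = hmat a ** g' ** hmat b"
    unfolding mem_dcoset_iff by blast
  moreover obtain k l where "g' = hmat k ** g ** hmat l"
    using assms unfolding mem_dcoset_iff by blast
  ultimately have "x = hmat (a + k) ** g ** hmat (l + b)"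
    by (simp add: matrix_mul_assoc flip: hmat_mult_hmat)
  then show "x \<in> dcoset g"
    unfolding mem_dcoset_iff by blast
qed

lemma dcoset_sym:
  assumes "g' \<in> dcoset g"
  shows "g \<in> dcoset g'"
proof -
  obtain k l where "g' = hmat k ** g ** hmat l"
    using assms unfolding mem_dcoset_iff by blast
  then have "hmat (- k) ** g' ** hmat (- l) = (hmat (- k) ** hmat k) ** g ** (hmat l ** hmat (- l))"
    by (simp add: matrix_mul_assoc)
  then have "g = hmat (- k) ** g' ** hmat (- l)"
    by (simp add: hmat_mult_hmat hmat_0)
  then show ?thesis
    unfolding mem_dcoset_iff by blast
qed

lemma dcoset_eq_iff: "dcoset g' = dcoset g \<longleftrightarrow> g' \<in> dcoset g"
  using dcoset_subset dcoset_sym dcoset_self by blast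

lemma uminus_dcoset: "uminus ` dcoset g = dcoset (- g)"
proof (rule set_eqI)
  fix x :: "real^2^2"
  have "x \<in> uminus ` dcoset g \<longleftrightarrow> - x \<in> dcoset g"
    by (auto intro!: image_eqI[of x uminus "- x"])
  then show "x \<in> uminus ` dcoset g \<longleftrightarrow> x \<in> dcoset (- g)"
    unfolding mem_dcoset_iff hmat_mult_uminus_mult by (metis minus_minus)
qed

lemma dcoset_gmatK_eq_iff:
  assumes "u \<in> OK" "v \<in> OK"
  shows "dcoset (gmatK u' v') = dcoset (gmatK u v) \<longleftrightarrow>
           (\<exists>k l. u' = eps2 (k + l) * u \<and> v' = eps2 (k - l) * v)"
  unfolding dcoset_eq_iff mem_dcoset_iff hmat_mult_gmatK_mult[OF assms] gmatK_eq_iff ..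

lemma even_add_iff_sum_diff: "even (i + j) \<longleftrightarrow> (\<exists>k l :: int. i = k + l \<and> j = k - l)"
proof
  assume "even (i + j)"
  then show "\<exists>k l. i = k + l \<and> j = k - l"
    by (intro exI[of _ "(i + j) div 2"] exI[of _ "i - (i + j) div 2"]) auto
qed auto

lemma dcoset_gmatK_eps2_eq_iff:
  assumes "u \<in> OK" "v \<in> OK" "u \<noteq> 0" "v \<noteq> 0"
  shows "dcoset (gmatK (eps2 i * u) (eps2 j * v)) = dcoset (gmatK u v) \<longleftrightarrow> even (i + j)"
  unfolding dcoset_gmatK_eq_iff[OF assms(1,2)] even_add_iff_sum_diff
  using assms(3,4) by (simp add: eps2_eq_iff)

definition dcoset_pm :: "real^2^2 \<Rightarrow> (real^2^2) set set" where
  "dcoset_pm g = {dcoset g, dcoset (- g)}"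

lemma dcoset_pm_uminus: "dcoset_pm (- g) = dcoset_pm g"
  unfolding dcoset_pm_def by auto

lemma dcoset_pm_cong: "dcoset g = dcoset g' \<Longrightarrow> dcoset_pm g = dcoset_pm g'"
  unfolding dcoset_pm_def by (metis uminus_dcoset)

lemma z1_hmat_mult_mult: "z1 (hmat k ** g ** hmat l) = eps2 (k + l) * z1 g"
  unfolding z1_def by (subst mat2_eta[of g]) (simp add: hmat_mult_mat2_mult eps2_add mult_ac)

lemma z2_hmat_mult_mult: "z2 (hmat k ** g ** hmat l) = eps2 (k - l) * z2 g"
  unfolding z2_def by (subst mat2_eta[of g]) (simp add: hmat_mult_mat2_mult eps2_diff mult_ac)

lemma pv_hmat_mult_mult: "pv n (hmat k ** g ** hmat l) = pv n g"
  unfolding pv_def z1_hmat_mult_mult z2_hmat_mult_mult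
  by (simp add: abs_mult eps2_pos order.strict_implies_order epsrel_TP_Image_eps2_mult)

lemma pv_uminus: "pv n (- g) = pv n g"
  unfolding pv_def z1_def z2_def by simp

lemma pv_eq_if_dcoset_mem_dcoset_pm:
  assumes "dcoset g \<in> dcoset_pm g0"
  shows "pv n g = pv n g0"
proof -
  have "g \<in> dcoset g0 \<or> g \<in> dcoset (- g0)"
    using assms dcoset_self[of g] unfolding dcoset_pm_def by auto
  then obtain k l where "g = hmat k ** g0 ** hmat l \<or> g = hmat k ** (- g0) ** hmat l"
    unfolding mem_dcoset_iff by blast
  then show ?thesis
    by (auto simp: pv_hmat_mult_mult pv_uminus)
qed

lemma positive_matrix_hmat_mult_mult: "positive_matrix g \<Longrightarrow> positive_matrix (hmat k ** g ** hmat l)"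
  by (subst (asm) mat2_eta, subst mat2_eta)
    (simp add: hmat_mult_mat2_mult positive_matrix_mat2 eps2_pos)

lemma admissible_uminus: "admissible n (- g) \<longleftrightarrow> admissible n g"
  unfolding admissible_iff by auto

lemma admissible_hmat_mult_mult:
  assumes "admissible n g"
  shows "admissible n (hmat k ** g ** hmat l)"
proof -
  have "(hmat k ** g ** hmat l) $ 1 $ 2 * (hmat k ** g ** hmat l) $ 2 $ 1 = g $ 1 $ 2 * g $ 2 $ 1"
    by (subst (1 2) mat2_eta[of g]) (simp add: hmat_mult_mat2_mult eps2_uminus field_simps)
  then show ?thesis
    using assms positive_matrix_hmat_mult_mult[of g k l] positive_matrix_hmat_mult_mult[of "- g" k l]
    unfolding admissible_iff hmat_mult_uminus_mult by auto
qed

lemma gmatK_Gamma25_admissible: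
  assumes "u \<in> TP (5 * n + 1)" "v \<in> TP n"
  shows "gmatK u v \<in> Gamma25" "admissible n (gmatK u v)"
  using assms positive_Gamma25_iff[of "gmatK u v" n] unfolding admissible_iff by auto

lemma Gamma25_admissible_iff:
  "g \<in> Gamma25 \<and> admissible n g \<longleftrightarrow>
     (\<exists>u \<in> TP (5 * n + 1). \<exists>v \<in> TP n. g = gmatK u v \<or> g = - gmatK u v)"
proof
  assume g: "g \<in> Gamma25 \<and> admissible n g"
  then consider "positive_matrix g" | "positive_matrix (- g)"
    unfolding admissible_iff by blast
  then show "\<exists>u \<in> TP (5 * n + 1). \<exists>v \<in> TP n. g = gmatK u v \<or> g = - gmatK u v"
  proof cases
    case 1
    then show ?thesis
      using g positive_Gamma25_iff[of g n] unfolding admissible_iff by blast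
  next
    case 2
    then have "\<exists>u \<in> TP (5 * n + 1). \<exists>v \<in> TP n. - g = gmatK u v"
      using g uminus_Gamma25 unfolding positive_Gamma25_iff[symmetric] admissible_iff by auto
    then show ?thesis
      by (metis minus_minus)
  qed
next
  assume "\<exists>u \<in> TP (5 * n + 1). \<exists>v \<in> TP n. g = gmatK u v \<or> g = - gmatK u v"
  then show "g \<in> Gamma25 \<and> admissible n g"
    using gmatK_Gamma25_admissible uminus_Gamma25 admissible_uminus by blast
qed

lemma DCS_iff: "C \<in> DCS n \<longleftrightarrow> (\<exists>g \<in> Gamma25. admissible n g \<and> C = dcoset g)"
  unfolding DCS_def using dcoset_self admissible_hmat_mult_mult
  by (auto simp: mem_dcoset_iff)

lemma uminus_image_DCS: "C \<in> DCS n \<Longrightarrow> uminus ` C \<in> DCS n"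
  unfolding DCS_iff using uminus_Gamma25 admissible_uminus uminus_dcoset by metis

lemma pmrel_Image: "C \<in> DCS n \<Longrightarrow> pmrel n `` {C} = {C, uminus ` C}"
  unfolding pmrel_def using uminus_image_DCS by auto

lemma DomS_eq: "DomS n = (\<lambda>(u, v). dcoset_pm (gmatK u v)) ` (TP (5 * n + 1) \<times> TP n)"
proof -
  have "DCS n = dcoset ` {g \<in> Gamma25. admissible n g}"
    using DCS_iff by blast
  moreover have "pmrel n `` {dcoset g} = dcoset_pm g" if "g \<in> Gamma25" "admissible n g" for g
  proof -
    have "dcoset g \<in> DCS n"
      using that DCS_iff by blast
    then show ?thesis
      by (simp add: pmrel_Image dcoset_pm_def uminus_dcoset)
  qed
  ultimately have "DomS n = dcoset_pm ` {g \<in> Gamma25. admissible n g}"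
    unfolding DomS_def quotient_def by auto
  also have "\<dots> = (\<lambda>(u, v). dcoset_pm (gmatK u v)) ` (TP (5 * n + 1) \<times> TP n)"
    unfolding Gamma25_admissible_iff by (auto simp: dcoset_pm_uminus; force)
  finally show ?thesis .
qed

lemma mem_DomS_iff: "X \<in> DomS n \<longleftrightarrow> (\<exists>u \<in> TP (5 * n + 1). \<exists>v \<in> TP n. X = dcoset_pm (gmatK u v))"
  unfolding DomS_eq by auto

lemma psi_eq_pv:
  assumes "X \<in> DomS n" "g \<in> Gamma25" "dcoset g \<in> X"
  shows "psi n X = pv n g"
  unfolding psi_def
proof (rule the_equality)
  show "\<exists>g' \<in> Gamma25. dcoset g' \<in> X \<and> pv n g = pv n g'"
    using assms by blast
  obtain g0 where "X = dcoset_pm g0"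
    using assms(1) unfolding mem_DomS_iff by blast
  then show "p = pv n g" if "\<exists>g' \<in> Gamma25. dcoset g' \<in> X \<and> p = pv n g'" for p
    using that assms(3) pv_eq_if_dcoset_mem_dcoset_pm by metis
qed

lemma psi_dcoset_pm_gmatK:
  assumes "u \<in> TP (5 * n + 1)" "v \<in> TP n"
  shows "psi n (dcoset_pm (gmatK u v)) = (epsrel (TP (5 * n + 1)) `` {u}, epsrel (TP n) `` {v})"
proof -
  have "psi n (dcoset_pm (gmatK u v)) = pv n (gmatK u v)"
    using assms gmatK_Gamma25_admissible by (intro psi_eq_pv) (auto simp: mem_DomS_iff dcoset_pm_def)
  also have "\<dots> = (epsrel (TP (5 * n + 1)) `` {u}, epsrel (TP n) `` {v})"
    using assms unfolding pv_def TP_def by simp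
  finally show ?thesis .
qed

text \<open>The sign of z1 separates a double coset from its negative.\<close>

lemma dcoset_pm_gmatK_neq_eps2:
  assumes "u \<in> OK" "v \<in> OK" "u > 0" "v \<noteq> 0"
  shows "dcoset_pm (gmatK u v) \<noteq> dcoset_pm (gmatK u (eps2 1 * v))"
proof
  assume "dcoset_pm (gmatK u v) = dcoset_pm (gmatK u (eps2 1 * v))"
  then consider "dcoset (gmatK (eps2 0 * u) (eps2 1 * v)) = dcoset (gmatK u v)"
    | "gmatK u (eps2 1 * v) \<in> dcoset (- gmatK u v)"
    unfolding dcoset_pm_def using dcoset_self by (auto simp: doubleton_eq_iff)
  then show False
  proof cases
    case 1
    then show False
      using assms dcoset_gmatK_eps2_eq_iff[of u v 0 1] by simp
  next
    case 2
    then obtain k l where "gmatK u (eps2 1 * v) = hmat k ** (- gmatK u v) ** hmat l"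
      unfolding mem_dcoset_iff by blast
    then have "z1 (gmatK u (eps2 1 * v)) = - z1 (hmat k ** gmatK u v ** hmat l)"
      by (simp add: hmat_mult_uminus_mult z1_def)
    then have "u = - (eps2 (k + l) * u)"
      by (simp only: z1_hmat_mult_mult z1_gmatK)
    then show False
      using assms(3) eps2_pos[of "k + l"] by (smt (verit) mult_pos_pos)
  qed
qed

lemma psi_fibre:
  assumes u: "u \<in> TP (5 * n + 1)" and v: "v \<in> TP n"
  shows "{X \<in> DomS n. psi n X = (epsrel (TP (5 * n + 1)) `` {u}, epsrel (TP n) `` {v})} =
           {dcoset_pm (gmatK u v), dcoset_pm (gmatK u (eps2 1 * v))}"
    (is "?F = _")
proof
  show "?F \<subseteq> {dcoset_pm (gmatK u v), dcoset_pm (gmatK u (eps2 1 * v))}"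
  proof
    fix X assume "X \<in> ?F"
    then obtain u' v' where u': "u' \<in> TP (5 * n + 1)" and v': "v' \<in> TP n"
      and X: "X = dcoset_pm (gmatK u' v')"
      and "psi n X = (epsrel (TP (5 * n + 1)) `` {u}, epsrel (TP n) `` {v})"
      unfolding mem_Collect_eq mem_DomS_iff by blast
    then obtain i j where ij: "u' = eps2 i * u" "v' = eps2 j * v"
      using u v by (auto simp: psi_dcoset_pm_gmatK epsrel_Image_eq_iff)
    have uv: "u \<in> OK" "v \<in> OK" "u \<noteq> 0" "v \<noteq> 0" "eps2 1 * v \<in> OK" "eps2 1 * v \<noteq> 0"
      using u v by (auto simp: TP_def OK_eps2_mult)
    show "X \<in> {dcoset_pm (gmatK u v), dcoset_pm (gmatK u (eps2 1 * v))}"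
    proof (cases "even (i + j)")
      case True
      then have "dcoset (gmatK u' v') = dcoset (gmatK u v)"
        unfolding ij using uv by (simp add: dcoset_gmatK_eps2_eq_iff)
      then show ?thesis
        unfolding X using dcoset_pm_cong by blast
    next
      case False
      then have "even (i + (j - 1))" by simp
      moreover have "v' = eps2 (j - 1) * (eps2 1 * v)"
        unfolding ij by (simp add: mult.assoc flip: eps2_add)
      ultimately have "dcoset (gmatK u' v') = dcoset (gmatK u (eps2 1 * v))"
        unfolding ij(1) using uv by (simp add: dcoset_gmatK_eps2_eq_iff)
      then show ?thesis
        unfolding X using dcoset_pm_cong by blast
    qed
  qed
  show "{dcoset_pm (gmatK u v), dcoset_pm (gmatK u (eps2 1 * v))} \<subseteq> ?F"
    using u v TP_eps2_mult[OF v, of 1]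
    by (auto simp: mem_DomS_iff psi_dcoset_pm_gmatK epsrel_TP_Image_eps2_mult)
qed

theorem theorem4p11:
  fixes n :: nat
  shows "(\<forall>X \<in> DomS n. \<forall>g g'. g \<in> Gamma25 \<and> g' \<in> Gamma25 \<and> dcoset g \<in> X \<and> dcoset g' \<in> X
            \<longrightarrow> pv n g = pv n g')
       \<and> psi n ` DomS n = DK (5 * n + 1) \<times> DK n
       \<and> (\<forall>p \<in> DK (5 * n + 1) \<times> DK n. card {X \<in> DomS n. psi n X = p} = 2)"
proof (intro conjI ballI allI impI)
  fix X g g' assume "X \<in> DomS n" "g \<in> Gamma25 \<and> g' \<in> Gamma25 \<and> dcoset g \<in> X \<and> dcoset g' \<in> X"
  moreover obtain g0 where "X = dcoset_pm g0"
    using \<open>X \<in> DomS n\<close> unfolding mem_DomS_iff by blast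
  ultimately show "pv n g = pv n g'"
    using pv_eq_if_dcoset_mem_dcoset_pm by metis
next
  have "psi n ` DomS n =
          (\<lambda>(u, v). (epsrel (TP (5 * n + 1)) `` {u}, epsrel (TP n) `` {v})) ` (TP (5 * n + 1) \<times> TP n)"
    unfolding DomS_eq image_image by (rule image_cong) (auto simp: psi_dcoset_pm_gmatK)
  then show "psi n ` DomS n = DK (5 * n + 1) \<times> DK n"
    unfolding DK_def quotient_def UNION_singleton_eq_range image_paired_Times .
next
  fix p assume "p \<in> DK (5 * n + 1) \<times> DK n"
  then obtain u v where u: "u \<in> TP (5 * n + 1)" and v: "v \<in> TP n"
    and p: "p = (epsrel (TP (5 * n + 1)) `` {u}, epsrel (TP n) `` {v})"
    unfolding DK_def quotient_def by blast
  have "u \<in> OK" "v \<in> OK" "u > 0" "v \<noteq> 0"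
    using u v by (auto simp: TP_def)
  then show "card {X \<in> DomS n. psi n X = p} = 2"
    unfolding p psi_fibre[OF u v] by (simp add: dcoset_pm_gmatK_neq_eps2)
qed

end
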